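(* The Oracle Mechanism is oneway-truthful: for every seller $i$ with true cost $c_i$ and every vector $d$ of reported costs with $d_i>c_i$, we have $u_i(c_i,d_{-i})\ge u_i(d)$, where $u_i(\cdot)$ denotes seller $i$'s utility (payment received minus $c_i$ if $i$ is a winner, and payment received otherwise) when the mechanism is run on the given reported cost vector.
   Context: Sellers $S=\{1,\dots,n\}$ each own one indivisible item with a private true cost; the mechanism runs on reported costs $d$. The buyer's utility is a monotone submodular $F:2^S\to\mathbb R_{\ge0}$, budget $B>0$; $d(T)=\sum_{i\in T}d_i$. $F^\star=\max\{F(T):d(T)\le B\}$. Greedy sequence $\chi(F)=\langle x_1,\dots,x_n\rangle$ (w.r.t. reported costs): with $\chi_0=\emptyset$, $\chi_i=\{x_1,\dots,x_i\}$, $x_i$ maximizes $(F(\chi_{i-1}\cup\{s\})-F(\chi_{i-1}))/d_s$ over $s\notin\chi_{i-1}$ (ratio $+\infty$ if $d_s=0$; ties arbitrary); $\partial_i=F(\chi_i)-F(\chi_{i-1})$. Oracle Mechanism: compute $F^\star$, construct $\chi(F)$, let $k$ be the largest integer with $F(\chi_k)\le F^\star/2$, declare $\chi_k$ the winners, and pay each winner $x_j$ the amount $2r_{x_j}\partial_j$, where $r_s=B/F^\star_s$ and $F^\star_s=\max\{F(T):T\subseteq S\setminus\{s\},d(T)\le B\}$; losers are paid $0$. *)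

theory Defs
  imports "HOL-Library.Extended_Real"
begin

text \<open>Sellers are 1..n. F : nat set => real is the buyer's utility, d : nat => real
  the reported cost vector, B the budget.\<close>

definition cost :: "(nat \<Rightarrow> real) \<Rightarrow> nat set \<Rightarrow> real" where
  "cost d T = (\<Sum>i\<in>T. d i)"

definition Fstar :: "nat \<Rightarrow> (nat set \<Rightarrow> real) \<Rightarrow> real \<Rightarrow> (nat \<Rightarrow> real) \<Rightarrow> real" where
  "Fstar n F B d = Max {F T | T. T \<subseteq> {1..n} \<and> cost d T \<le> B}"

definition Fstar_excl :: "nat \<Rightarrow> (nat set \<Rightarrow> real) \<Rightarrow> real \<Rightarrow> (nat \<Rightarrow> real) \<Rightarrow> nat \<Rightarrow> real" where
  "Fstar_excl n F B d s = Max {F T | T. T \<subseteq> {1..n} - {s} \<and> cost d T \<le> B}"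

definition ratio :: "(nat set \<Rightarrow> real) \<Rightarrow> (nat \<Rightarrow> real) \<Rightarrow> nat set \<Rightarrow> nat \<Rightarrow> ereal" where
  "ratio F d A s = (if d s = 0 then \<infinity> else ereal ((F (insert s A) - F A) / d s))"

definition greedy_next :: "nat \<Rightarrow> (nat set \<Rightarrow> real) \<Rightarrow> (nat \<Rightarrow> real) \<Rightarrow> nat set \<Rightarrow> nat" where
  "greedy_next n F d A = (LEAST s. s \<in> {1..n} - A \<and>
      (\<forall>t\<in>{1..n} - A. ratio F d A t \<le> ratio F d A s))"

fun chi :: "nat \<Rightarrow> (nat set \<Rightarrow> real) \<Rightarrow> (nat \<Rightarrow> real) \<Rightarrow> nat \<Rightarrow> nat set" where
  "chi n F d 0 = {}"
| "chi n F d (Suc j) = insert (greedy_next n F d (chi n F d j)) (chi n F d j)"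

text \<open>x_j, the j-th greedy element (j >= 1).\<close>
definition gx :: "nat \<Rightarrow> (nat set \<Rightarrow> real) \<Rightarrow> (nat \<Rightarrow> real) \<Rightarrow> nat \<Rightarrow> nat" where
  "gx n F d j = greedy_next n F d (chi n F d (j - 1))"

definition marg :: "nat \<Rightarrow> (nat set \<Rightarrow> real) \<Rightarrow> (nat \<Rightarrow> real) \<Rightarrow> nat \<Rightarrow> real" where
  "marg n F d j = F (chi n F d j) - F (chi n F d (j - 1))"

definition kcut :: "nat \<Rightarrow> (nat set \<Rightarrow> real) \<Rightarrow> real \<Rightarrow> (nat \<Rightarrow> real) \<Rightarrow> nat" where
  "kcut n F B d = (let K = {j\<in>{0..n}. F (chi n F d j) \<le> Fstar n F B d / 2}
                    in if K = {} then 0 else Max K)"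

definition winner :: "nat \<Rightarrow> (nat set \<Rightarrow> real) \<Rightarrow> real \<Rightarrow> (nat \<Rightarrow> real) \<Rightarrow> nat \<Rightarrow> bool" where
  "winner n F B d i = (\<exists>j\<in>{1..kcut n F B d}. gx n F d j = i)"

definition payment :: "nat \<Rightarrow> (nat set \<Rightarrow> real) \<Rightarrow> real \<Rightarrow> (nat \<Rightarrow> real) \<Rightarrow> nat \<Rightarrow> real" where
  "payment n F B d i =
     (if winner n F B d i then
        2 * (B / Fstar_excl n F B d i) *
          marg n F d (THE j. j \<in> {1..kcut n F B d} \<and> gx n F d j = i)
      else 0)"

definition utility :: "nat \<Rightarrow> (nat set \<Rightarrow> real) \<Rightarrow> real \<Rightarrow> (nat \<Rightarrow> real) \<Rightarrow> nat \<Rightarrow> real \<Rightarrow> real" where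
  "utility n F B d i c = payment n F B d i - (if winner n F B d i then c else 0)"

end

theory Submission
  imports Defs
begin

text \<open>Let seller i, reporting its true cost c, be picked at step p' of the greedy run, after the
  set X. Lowering one's own cost only raises one's own ratio, so the overreporting run makes the
  same choices before step p' and picks i at some step p \<ge> p', after a set Y \<supseteq> X.
  If i wins when overreporting, then F(X \<union> {i}) \<le> F(Y \<union> {i}) \<le> F*/2, and F* does not decrease
  when a cost decreases, so i also wins when truthful; by submodularity its marginal gain after X
  is at least that after Y, and F*_i does not depend on i's report, so its payment does not
  decrease. If i loses when overreporting but wins when truthful, the payment covers c: at step p'
  every seller's marginal gain per unit cost is at most \<rho> = \<partial>/c, so F* and F*_i are both at most
  F(X) + \<rho>B, while F(X) + \<partial> \<le> F*/2; hence c F*_i \<le> 2B\<partial>.\<close>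

lemma greedy_next_maximizes:
  assumes "{1..n} - A \<noteq> {}"
  shows "greedy_next n F e A \<in> {1..n} - A \<and>
         (\<forall>t\<in>{1..n} - A. ratio F e A t \<le> ratio F e A (greedy_next n F e A))"
proof -
  have "Max (ratio F e A ` ({1..n} - A)) \<in> ratio F e A ` ({1..n} - A)"
    using assms by (intro Max_in) auto
  then obtain s where "s \<in> {1..n} - A" "ratio F e A s = Max (ratio F e A ` ({1..n} - A))"
    by auto
  then have "s \<in> {1..n} - A \<and> (\<forall>t\<in>{1..n} - A. ratio F e A t \<le> ratio F e A s)"
    by simp
  then show ?thesis
    unfolding greedy_next_def by (rule LeastI)
qed

lemma finite_chi: "finite (chi n F e j)"
  by (induction j) auto

lemma chi_not_full:
  assumes "card (chi n F e j) = j" "j < n"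
  shows "{1..n} - chi n F e j \<noteq> {}"
proof
  assume "{1..n} - chi n F e j = {}"
  then have "card {1..n} \<le> card (chi n F e j)"
    by (intro card_mono) (auto simp: finite_chi)
  with assms show False
    by simp
qed

lemma chi_subset_card: "j \<le> n \<Longrightarrow> chi n F e j \<subseteq> {1..n} \<and> card (chi n F e j) = j"
proof (induction j)
  case (Suc j)
  then have "{1..n} - chi n F e j \<noteq> {}"
    by (intro chi_not_full) auto
  then have "greedy_next n F e (chi n F e j) \<in> {1..n} - chi n F e j"
    using greedy_next_maximizes by blast
  with Suc show ?case
    by (auto simp: finite_subset)
qed simp

lemma chi_subset: "j \<le> n \<Longrightarrow> chi n F e j \<subseteq> {1..n}"
  using chi_subset_card by blast

lemma chi_mono: "j \<le> j' \<Longrightarrow> chi n F e j \<subseteq> chi n F e j'"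
  by (induction j' rule: dec_induct) auto

lemma gx_step:
  assumes "j \<in> {1..n}"
  shows "gx n F e j \<in> {1..n} - chi n F e (j - 1)"
    and "chi n F e j = insert (gx n F e j) (chi n F e (j - 1))"
    and "t \<in> {1..n} - chi n F e (j - 1) \<Longrightarrow>
           ratio F e (chi n F e (j - 1)) t \<le> ratio F e (chi n F e (j - 1)) (gx n F e j)"
    and "chi n F e (j - 1) \<subseteq> {1..n}"
proof -
  obtain m where m: "j = Suc m" "m < n"
    using assms by (cases j) auto
  then have "{1..n} - chi n F e m \<noteq> {}"
    using chi_not_full chi_subset_card by (metis less_imp_le)
  from greedy_next_maximizes[OF this, of F e] m
  show "gx n F e j \<in> {1..n} - chi n F e (j - 1)"
    and "chi n F e j = insert (gx n F e j) (chi n F e (j - 1))"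
    and "t \<in> {1..n} - chi n F e (j - 1) \<Longrightarrow>
           ratio F e (chi n F e (j - 1)) t \<le> ratio F e (chi n F e (j - 1)) (gx n F e j)"
    by (auto simp: gx_def)
  show "chi n F e (j - 1) \<subseteq> {1..n}"
    using chi_subset m by simp
qed

lemma chi_eq_gx_image: "j \<le> n \<Longrightarrow> chi n F e j = gx n F e ` {1..j}"
proof (induction j)
  case (Suc j)
  then show ?case
    using gx_step(2)[of "Suc j" n F e] by (auto simp: atLeastAtMostSuc_conv)
qed simp

lemma inj_on_gx: "inj_on (gx n F e) {1..n}"
proof (rule linorder_inj_onI')
  fix j j' assume "j \<in> {1..n}" "j' \<in> {1..n}" "j < j'"
  then have "gx n F e j \<in> chi n F e (j' - 1)"
    using gx_step(2)[of j n F e] chi_mono[of j "j' - 1" n F e] by auto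
  then show "gx n F e j \<noteq> gx n F e j'"
    using gx_step(1)[of j' n F e] \<open>j' \<in> {1..n}\<close> by auto
qed

lemma gx_image: "gx n F e ` {1..n} = {1..n}"
  using chi_subset_card[of n n F e] chi_eq_gx_image[of n n F e]
  by (simp add: card_subset_eq)

definition greedy_pos :: "nat \<Rightarrow> (nat set \<Rightarrow> real) \<Rightarrow> (nat \<Rightarrow> real) \<Rightarrow> nat \<Rightarrow> nat" where
  "greedy_pos n F e = the_inv_into {1..n} (gx n F e)"

lemma greedy_pos_in: "s \<in> {1..n} \<Longrightarrow> greedy_pos n F e s \<in> {1..n}"
  unfolding greedy_pos_def by (rule the_inv_into_into[OF inj_on_gx _ order_refl]) (simp only: gx_image)

lemma gx_greedy_pos: "s \<in> {1..n} \<Longrightarrow> gx n F e (greedy_pos n F e s) = s"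
  unfolding greedy_pos_def by (rule f_the_inv_into_f[OF inj_on_gx]) (simp only: gx_image)

lemma greedy_pos_gx: "j \<in> {1..n} \<Longrightarrow> greedy_pos n F e (gx n F e j) = j"
  unfolding greedy_pos_def by (rule the_inv_into_f_f[OF inj_on_gx])

lemma kcut_le: "kcut n F B e \<le> n"
  unfolding kcut_def Let_def by (auto intro!: Max.boundedI)

lemma le_kcutI:
  assumes "j \<le> n" "F (chi n F e j) \<le> Fstar n F B e / 2"
  shows "j \<le> kcut n F B e"
  using assms unfolding kcut_def Let_def by (auto intro!: Max_ge)

lemma winner_iff:
  assumes "s \<in> {1..n}"
  shows "winner n F B e s \<longleftrightarrow> greedy_pos n F e s \<le> kcut n F B e"
proof
  assume "winner n F B e s"
  then obtain j where "j \<in> {1..kcut n F B e}" "gx n F e j = s"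
    unfolding winner_def by blast
  then show "greedy_pos n F e s \<le> kcut n F B e"
    using greedy_pos_gx[of j n F e] kcut_le[of n F B e] by auto
next
  assume "greedy_pos n F e s \<le> kcut n F B e"
  then show "winner n F B e s"
    using greedy_pos_in[OF assms] gx_greedy_pos[OF assms] unfolding winner_def by force
qed

lemma winner_in: "winner n F B e s \<Longrightarrow> s \<in> {1..n}"
  using kcut_le[of n F B e] gx_step(1)[of _ n F e] unfolding winner_def by fastforce

lemma payment_winner:
  assumes "winner n F B e s"
  shows "payment n F B e s = 2 * (B / Fstar_excl n F B e s) * marg n F e (greedy_pos n F e s)"
proof -
  have s: "s \<in> {1..n}"
    using winner_in assms .
  have "(THE j. j \<in> {1..kcut n F B e} \<and> gx n F e j = s) = greedy_pos n F e s"
  proof (rule the_equality)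
    show "greedy_pos n F e s \<in> {1..kcut n F B e} \<and> gx n F e (greedy_pos n F e s) = s"
      using greedy_pos_in[OF s] gx_greedy_pos[OF s] winner_iff[OF s] assms by auto
    fix j assume "j \<in> {1..kcut n F B e} \<and> gx n F e j = s"
    then show "j = greedy_pos n F e s"
      using greedy_pos_gx[of j n F e] kcut_le[of n F B e] by auto
  qed
  with assms show ?thesis
    by (simp add: payment_def)
qed

lemma budget_Max_attained:
  assumes "finite S" "B \<ge> 0"
  shows "\<exists>T\<subseteq>S. cost e T \<le> B \<and> Max {F T | T. T \<subseteq> S \<and> cost e T \<le> B} = F T"
proof -
  have "Max {F T | T. T \<subseteq> S \<and> cost e T \<le> B} \<in> {F T | T. T \<subseteq> S \<and> cost e T \<le> B}"
    using assms by (intro Max_in) (auto intro!: exI[of _ "{}"] simp: cost_def)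
  then show ?thesis
    by auto
qed

lemma budget_Max_ge:
  assumes "finite S" "T \<subseteq> S" "cost e T \<le> B"
  shows "F T \<le> Max {F T | T. T \<subseteq> S \<and> cost e T \<le> B}"
  using assms by (intro Max_ge) auto

lemma Fstar_attained: "B \<ge> 0 \<Longrightarrow> \<exists>T\<subseteq>{1..n}. cost e T \<le> B \<and> Fstar n F B e = F T"
  unfolding Fstar_def by (rule budget_Max_attained) simp

lemma Fstar_ge: "T \<subseteq> {1..n} \<Longrightarrow> cost e T \<le> B \<Longrightarrow> F T \<le> Fstar n F B e"
  unfolding Fstar_def by (rule budget_Max_ge) simp

lemma Fstar_excl_attained:
  "B \<ge> 0 \<Longrightarrow> \<exists>T\<subseteq>{1..n} - {s}. cost e T \<le> B \<and> Fstar_excl n F B e s = F T"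
  unfolding Fstar_excl_def by (rule budget_Max_attained) simp

lemma Fstar_excl_ge: "T \<subseteq> {1..n} - {s} \<Longrightarrow> cost e T \<le> B \<Longrightarrow> F T \<le> Fstar_excl n F B e s"
  unfolding Fstar_excl_def by (rule budget_Max_ge) simp

lemma Fstar_antimono:
  assumes "B \<ge> 0" "\<forall>t\<in>{1..n}. e' t \<le> e t"
  shows "Fstar n F B e \<le> Fstar n F B e'"
proof -
  obtain T where T: "T \<subseteq> {1..n}" "cost e T \<le> B" "Fstar n F B e = F T"
    using Fstar_attained[OF assms(1), of n e F] by blast
  have "cost e' T \<le> cost e T"
    unfolding cost_def using T(1) assms(2) by (intro sum_mono) auto
  with T have "F T \<le> Fstar n F B e'"
    by (intro Fstar_ge) auto
  with T(3) show ?thesis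
    by simp
qed

lemma Fstar_excl_cong:
  assumes "\<forall>t\<in>{1..n} - {s}. e t = e' t"
  shows "Fstar_excl n F B e s = Fstar_excl n F B e' s"
proof -
  have "cost e T = cost e' T" if "T \<subseteq> {1..n} - {s}" for T
    unfolding cost_def using that assms by (intro sum.cong) auto
  then have "{F T | T. T \<subseteq> {1..n} - {s} \<and> cost e T \<le> B} =
             {F T | T. T \<subseteq> {1..n} - {s} \<and> cost e' T \<le> B}"
    by (intro Collect_cong) auto
  then show ?thesis
    unfolding Fstar_excl_def by simp
qed

lemma ratio_le_ratio_fun_upd:
  assumes "F A \<le> F (insert s A)" "0 \<le> c" "c < e s"
  shows "ratio F e A t \<le> ratio F (e(s := c)) A t"
proof (cases "t = s \<and> c \<noteq> 0")
  case True
  then have "(F (insert s A) - F A) / e s \<le> (F (insert s A) - F A) / c"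
    using assms by (intro divide_left_mono) auto
  with True assms show ?thesis
    by (simp add: ratio_def)
qed (auto simp: ratio_def)

lemma marginal_le_if_ratio_le:
  assumes "0 \<le> e y" "ratio F e A y \<le> ereal \<rho>"
  shows "F (insert y A) - F A \<le> \<rho> * e y"
proof -
  have "e y > 0"
    using assms by (cases "e y = 0") (auto simp: ratio_def)
  with assms show ?thesis
    by (simp add: ratio_def pos_divide_le_eq mult.commute)
qed

lemma greedy_next_eq_if_ratio_le:
  assumes "{1..n} - A \<noteq> {}"
    and le: "\<forall>t\<in>{1..n} - A. ratio F e A t \<le> ratio F e' A t"
    and eq: "ratio F e A (greedy_next n F e' A) = ratio F e' A (greedy_next n F e' A)"
  shows "greedy_next n F e A = greedy_next n F e' A"
proof -
  let ?s = "greedy_next n F e' A"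
  have s: "?s \<in> {1..n} - A" "\<forall>t\<in>{1..n} - A. ratio F e' A t \<le> ratio F e' A ?s"
    using greedy_next_maximizes[OF assms(1)] by auto
  show ?thesis
    unfolding greedy_next_def[of n F e A]
  proof (rule Least_equality)
    show "?s \<in> {1..n} - A \<and> (\<forall>t\<in>{1..n} - A. ratio F e A t \<le> ratio F e A ?s)"
      using s le eq by (metis order_trans)
  next
    fix y assume y: "y \<in> {1..n} - A \<and> (\<forall>t\<in>{1..n} - A. ratio F e A t \<le> ratio F e A y)"
    then have "\<forall>t\<in>{1..n} - A. ratio F e' A t \<le> ratio F e' A y"
      using s le eq by (metis order_trans)
    with y show "?s \<le> y"
      unfolding greedy_next_def by (intro Least_le) simp
  qed
qed

locale monotone_submodular =
  fixes n :: nat and F :: "nat set \<Rightarrow> real"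
  assumes nonneg: "A \<subseteq> {1..n} \<Longrightarrow> 0 \<le> F A"
    and mono: "A \<subseteq> A' \<Longrightarrow> A' \<subseteq> {1..n} \<Longrightarrow> F A \<le> F A'"
    and submodular: "A \<subseteq> {1..n} \<Longrightarrow> A' \<subseteq> {1..n} \<Longrightarrow> F (A \<union> A') + F (A \<inter> A') \<le> F A + F A'"
begin

lemma marg_nonneg: "j \<in> {1..n} \<Longrightarrow> 0 \<le> marg n F e j"
  unfolding marg_def using gx_step(1,2,4)[of j n F e] by (simp add: mono subset_insertI)

lemma le_plus_marginal_sum:
  assumes "T \<subseteq> {1..n}" "X \<subseteq> {1..n}"
  shows "F (X \<union> T) \<le> F X + (\<Sum>y\<in>T. F (insert y X) - F X)"
  using finite_subset[OF assms(1) finite_atLeastAtMost] assms(1)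
proof (induction T rule: finite_induct)
  case (insert y T)
  have "F (insert y X \<union> (X \<union> T)) + F (insert y X \<inter> (X \<union> T)) \<le> F (insert y X) + F (X \<union> T)"
    using insert.prems assms(2) by (intro submodular) auto
  moreover have "insert y X \<union> (X \<union> T) = X \<union> insert y T" "insert y X \<inter> (X \<union> T) = X"
    using insert.hyps by auto
  ultimately show ?case
    using insert by simp
qed simp

lemma le_plus_ratio_cost:
  assumes "X \<subseteq> {1..n}" "T \<subseteq> {1..n}" "\<forall>t\<in>{1..n}. 0 \<le> e t" "0 \<le> \<rho>"
    and marginal: "\<forall>y\<in>T - X. F (insert y X) - F X \<le> \<rho> * e y"
  shows "F T \<le> F X + \<rho> * cost e T"
proof -
  have "F T \<le> F (X \<union> (T - X))"
    using assms by (intro mono) auto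
  also have "\<dots> \<le> F X + (\<Sum>y\<in>T - X. F (insert y X) - F X)"
    using assms by (intro le_plus_marginal_sum) auto
  also have "\<dots> \<le> F X + (\<Sum>y\<in>T - X. \<rho> * e y)"
    using marginal by (intro add_left_mono sum_mono) auto
  also have "\<dots> \<le> F X + (\<Sum>y\<in>T. \<rho> * e y)"
    using assms finite_subset[OF assms(2) finite_atLeastAtMost] by (intro add_left_mono sum_mono2) auto
  finally show ?thesis
    by (simp add: cost_def sum_distrib_left)
qed

lemma chi_le_half_Fstar:
  assumes "1 \<le> j" "j \<le> kcut n F B e"
  shows "F (chi n F e j) \<le> Fstar n F B e / 2"
proof -
  let ?K = "{j\<in>{0..n}. F (chi n F e j) \<le> Fstar n F B e / 2}"
  have "?K \<noteq> {}"
    using assms unfolding kcut_def Let_def by (cases "?K = {}") auto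
  then have "kcut n F B e = Max ?K"
    by (simp only: kcut_def Let_def if_not_P if_False)
  moreover have "Max ?K \<in> ?K"
    using \<open>?K \<noteq> {}\<close> by (intro Max_in) auto
  ultimately have "kcut n F B e \<in> ?K"
    by simp
  moreover have "F (chi n F e j) \<le> F (chi n F e (kcut n F B e))"
    using assms chi_mono chi_subset kcut_le by (metis mono)
  ultimately show ?thesis
    by simp
qed

lemma Fstar_nonneg: "0 \<le> B \<Longrightarrow> 0 \<le> Fstar n F B e"
  using Fstar_ge[of "{}" n e B F] nonneg[of "{}"] by (simp add: cost_def)

lemma Fstar_excl_nonneg: "0 \<le> B \<Longrightarrow> 0 \<le> Fstar_excl n F B e s"
  using Fstar_excl_ge[of "{}" n s e B F] nonneg[of "{}"] by (simp add: cost_def)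

lemma payment_nonneg:
  assumes "0 \<le> B"
  shows "0 \<le> payment n F B e s"
proof (cases "winner n F B e s")
  case True
  then have "0 \<le> marg n F e (greedy_pos n F e s)"
    using winner_in greedy_pos_in marg_nonneg by blast
  with True show ?thesis
    using payment_winner assms Fstar_excl_nonneg by simp
qed (simp add: payment_def)

lemma Fstar_le_Fstar_excl_plus:
  assumes "0 \<le> B" "\<forall>t\<in>{1..n}. 0 \<le> e t" "s \<in> {1..n}"
  shows "Fstar n F B e \<le> Fstar_excl n F B e s + F {s}"
proof -
  obtain T where T: "T \<subseteq> {1..n}" "cost e T \<le> B" "Fstar n F B e = F T"
    using Fstar_attained[OF assms(1), of n e F] by blast
  have "cost e (T - {s}) \<le> cost e T"
    unfolding cost_def using T(1) assms(2) finite_subset[OF T(1) finite_atLeastAtMost] by (intro sum_mono2) auto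
  then have "F (T - {s}) \<le> Fstar_excl n F B e s"
    using T by (intro Fstar_excl_ge) auto
  moreover have "F T \<le> F ((T - {s}) \<union> {s})"
    using T(1) assms(3) by (intro mono) auto
  moreover have "F ((T - {s}) \<union> {s}) + F ((T - {s}) \<inter> {s}) \<le> F (T - {s}) + F {s}"
    using T(1) assms(3) by (intro submodular) auto
  moreover have "0 \<le> F ((T - {s}) \<inter> {s})"
    by (simp add: nonneg)
  ultimately show ?thesis
    using T(3) by linarith
qed

lemma le_greedy_step_plus_budget:
  assumes j: "j \<in> {1..n}" and e: "\<forall>t\<in>{1..n}. 0 \<le> e t" and pos: "0 < e (gx n F e j)"
    and T: "T \<subseteq> {1..n}" "cost e T \<le> B"
  shows "F T \<le> F (chi n F e (j - 1)) + marg n F e j / e (gx n F e j) * B"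
proof -
  let ?X = "chi n F e (j - 1)" and ?s = "gx n F e j"
  define \<rho> where "\<rho> = marg n F e j / e ?s"
  have "0 \<le> \<rho>"
    using marg_nonneg[OF j] pos by (simp add: \<rho>_def)
  have "ratio F e ?X ?s = ereal \<rho>"
    using pos gx_step(2)[OF j] by (simp add: ratio_def \<rho>_def marg_def)
  then have "\<forall>y\<in>{1..n} - ?X. F (insert y ?X) - F ?X \<le> \<rho> * e y"
    using gx_step(3)[OF j, of _ F e] e by (intro ballI marginal_le_if_ratio_le) auto
  then have "F T \<le> F ?X + \<rho> * cost e T"
    using gx_step(4)[OF j] T(1) e \<open>0 \<le> \<rho>\<close> by (intro le_plus_ratio_cost) auto
  also have "\<dots> \<le> F ?X + \<rho> * B"
    using T(2) \<open>0 \<le> \<rho>\<close> by (intro add_left_mono mult_left_mono)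
  finally show ?thesis
    by (simp add: \<rho>_def)
qed

lemma winner_cost_bound:
  assumes "0 \<le> B" "\<forall>t\<in>{1..n}. 0 \<le> e t" "winner n F B e s"
  shows "e s * Fstar_excl n F B e s \<le> 2 * B * marg n F e (greedy_pos n F e s)"
proof -
  define j where "j = greedy_pos n F e s"
  define X where "X = chi n F e (j - 1)"
  define D where "D = marg n F e j"
  have s: "s \<in> {1..n}"
    using winner_in assms(3) .
  have j: "j \<in> {1..n}" "gx n F e j = s" "j \<le> kcut n F B e"
    using greedy_pos_in[OF s] gx_greedy_pos[OF s] winner_iff[OF s] assms(3) by (auto simp: j_def)
  have "0 \<le> D"
    using marg_nonneg[OF j(1)] by (simp add: D_def)
  show ?thesis
  proof (cases "e s = 0")
    case False
    then have pos: "0 < e s"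
      using assms(2) s by force
    define \<rho> where "\<rho> = D / e s"
    have bound: "F T \<le> F X + \<rho> * B" if "T \<subseteq> {1..n}" "cost e T \<le> B" for T
      using le_greedy_step_plus_budget[OF j(1) assms(2) _ that] pos j(2)
      by (simp add: X_def D_def \<rho>_def)
    have "Fstar n F B e \<le> F X + \<rho> * B"
      using Fstar_attained[OF assms(1), of n e F] bound by auto
    moreover obtain T where "T \<subseteq> {1..n} - {s}" "cost e T \<le> B" "Fstar_excl n F B e s = F T"
      using Fstar_excl_attained[OF assms(1), of n s e F] by blast
    then have "Fstar_excl n F B e s \<le> F X + \<rho> * B"
      using bound by auto
    moreover have "F X + D \<le> Fstar n F B e / 2"
      using chi_le_half_Fstar[of j B e] j by (simp add: X_def D_def marg_def)
    ultimately have "Fstar_excl n F B e s \<le> 2 * (\<rho> * B)"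
      using \<open>0 \<le> D\<close> by linarith
    then have "e s * Fstar_excl n F B e s \<le> e s * (2 * (\<rho> * B))"
      using pos by (intro mult_left_mono) auto
    with pos show ?thesis
      by (simp add: \<rho>_def D_def j_def mult.commute mult.left_commute)
  qed (use assms(1) \<open>0 \<le> D\<close> in \<open>simp add: D_def j_def\<close>)
qed

end

locale misreport = monotone_submodular +
  fixes B :: real and d :: "nat \<Rightarrow> real" and i :: nat and c :: real
  assumes B_pos: "0 < B" and d_nonneg: "\<forall>t\<in>{1..n}. 0 \<le> d t"
    and i_in: "i \<in> {1..n}" and c_nonneg: "0 \<le> c" and overreport: "c < d i"
begin

abbreviation d_true :: "nat \<Rightarrow> real" where
  "d_true \<equiv> d(i := c)"

abbreviation pos_true :: nat where
  "pos_true \<equiv> greedy_pos n F d_true i"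

abbreviation before_i :: "nat set" where
  "before_i \<equiv> chi n F d_true (pos_true - 1)"

lemma d_true_nonneg: "\<forall>t\<in>{1..n}. 0 \<le> d_true t"
  using d_nonneg c_nonneg by simp

lemma pos_true_in: "pos_true \<in> {1..n}"
  using greedy_pos_in[OF i_in] .

lemma before_i_step:
  "before_i \<subseteq> {1..n}" "i \<notin> before_i" "chi n F d_true pos_true = insert i before_i"
  using gx_step(1,2,4)[OF pos_true_in, of F d_true] gx_greedy_pos[OF i_in, of F d_true]
  by auto

text \<open>Lowering its own report only raises i's own ratio, and i is not chosen before pos_true,
  so both runs make the same choices up to that step.\<close>

lemma chi_eq_before_pos_true: "m < pos_true \<Longrightarrow> chi n F d m = chi n F d_true m"
proof (induction m)
  case (Suc m)
  let ?A = "chi n F d_true m"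
  have m: "Suc m \<in> {1..n}"
    using Suc.prems pos_true_in by (simp only: atLeastAtMost_iff) linarith
  have choice: "greedy_next n F d_true ?A = gx n F d_true (Suc m)"
    by (simp add: gx_def)
  have "gx n F d_true (Suc m) \<noteq> i"
    using greedy_pos_gx[OF m, of F d_true] Suc.prems by force
  moreover have "{1..n} - ?A \<noteq> {}" "?A \<subseteq> {1..n}"
    using m gx_step(1)[OF m, of F d_true] chi_subset[of m n F d_true] by auto
  moreover have "\<forall>t\<in>{1..n} - ?A. ratio F d ?A t \<le> ratio F d_true ?A t"
    using \<open>?A \<subseteq> {1..n}\<close> i_in c_nonneg overreport by (intro ballI ratio_le_ratio_fun_upd mono) auto
  ultimately have "greedy_next n F d ?A = greedy_next n F d_true ?A"
    by (intro greedy_next_eq_if_ratio_le) (auto simp: choice ratio_def)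
  with Suc show ?case
    by (simp add: fun_upd_def)
qed simp

lemma pos_true_le: "pos_true \<le> greedy_pos n F d i"
proof (rule ccontr)
  let ?p = "greedy_pos n F d i"
  assume "\<not> pos_true \<le> ?p"
  then have "?p \<le> pos_true - 1" "?p < pos_true"
    by auto
  have "i \<in> chi n F d ?p"
    using gx_step(2)[OF greedy_pos_in[OF i_in], of F d] gx_greedy_pos[OF i_in, of F d] by simp
  also have "\<dots> = chi n F d_true ?p"
    using chi_eq_before_pos_true[OF \<open>?p < pos_true\<close>] .
  also have "\<dots> \<subseteq> before_i"
    using chi_mono[OF \<open>?p \<le> pos_true - 1\<close>] .
  finally show False
    using before_i_step(2) by simp
qed

lemma Fstar_excl_true_eq: "Fstar_excl n F B d_true i = Fstar_excl n F B d i"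
  by (rule Fstar_excl_cong) simp

lemma winner_true_if_winner:
  assumes "winner n F B d i"
  shows "winner n F B d_true i" "payment n F B d i \<le> payment n F B d_true i"
proof -
  let ?p = "greedy_pos n F d i"
  let ?Y = "chi n F d (?p - 1)"
  have p: "?p \<in> {1..n}" "?p \<le> kcut n F B d"
    using greedy_pos_in[OF i_in] winner_iff[OF i_in] assms by auto
  have Y: "?Y \<subseteq> {1..n}" "chi n F d ?p = insert i ?Y" "i \<notin> ?Y"
    using gx_step(1,2,4)[OF p(1), of F d] gx_greedy_pos[OF i_in, of F d] by auto
  have "before_i = chi n F d (pos_true - 1)"
    using chi_eq_before_pos_true[of "pos_true - 1"] pos_true_in by simp
  then have XY: "before_i \<subseteq> ?Y"
    using chi_mono pos_true_le by (metis diff_le_mono)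
  have "F (chi n F d_true pos_true) \<le> F (chi n F d ?p)"
    using before_i_step(3) Y XY i_in by (intro mono) auto
  also have "\<dots> \<le> Fstar n F B d / 2"
    using chi_le_half_Fstar p by auto
  also have "\<dots> \<le> Fstar n F B d_true / 2"
    using Fstar_antimono[of B n d_true d F] B_pos overreport by simp
  finally have "pos_true \<le> kcut n F B d_true"
    using pos_true_in by (intro le_kcutI) auto
  then show winner_true: "winner n F B d_true i"
    using winner_iff[OF i_in] by simp
  have "F (insert i before_i \<union> ?Y) + F (insert i before_i \<inter> ?Y) \<le> F (insert i before_i) + F ?Y"
    using before_i_step(1) Y(1) i_in by (intro submodular) auto
  moreover have "insert i before_i \<union> ?Y = insert i ?Y" "insert i before_i \<inter> ?Y = before_i"
    using XY Y(3) by auto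
  ultimately have "marg n F d ?p \<le> marg n F d_true pos_true"
    using Y(2) before_i_step(3) by (simp add: marg_def)
  then have "2 * (B / Fstar_excl n F B d i) * marg n F d ?p
             \<le> 2 * (B / Fstar_excl n F B d i) * marg n F d_true pos_true"
    using B_pos Fstar_excl_nonneg[of B d i] by (intro mult_left_mono) auto
  then show "payment n F B d i \<le> payment n F B d_true i"
    using assms winner_true by (simp add: payment_winner Fstar_excl_true_eq)
qed

lemma before_i_null_if_Fstar_excl_zero:
  assumes "winner n F B d_true i" "Fstar_excl n F B d_true i = 0"
  shows "F (insert i before_i) = 0" "F before_i = 0"
proof -
  have "Fstar n F B d_true \<le> F (insert i before_i)"
    using Fstar_le_Fstar_excl_plus[of B d_true i] B_pos d_true_nonneg i_in assms(2)
      mono[of "{i}" "insert i before_i"] before_i_step(1) by auto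
  moreover have "F (insert i before_i) \<le> Fstar n F B d_true / 2"
    using chi_le_half_Fstar[of pos_true B d_true] assms(1) before_i_step(3) pos_true_in
      winner_iff[OF i_in] by auto
  moreover have "0 \<le> F before_i" "F before_i \<le> F (insert i before_i)"
    using before_i_step(1) i_in nonneg mono[of before_i "insert i before_i"] by auto
  ultimately show "F (insert i before_i) = 0" "F before_i = 0"
    by linarith+
qed

text \<open>Here the payment formula divides by zero and yields 0, so this degenerate case has to be
  excluded: i contributes nothing, hence has ratio 0 under both reports, and the overreporting
  run also picks i at position pos_true, where F is still 0.\<close>

lemma winner_if_Fstar_excl_zero:
  assumes "0 < c" "winner n F B d_true i" "Fstar_excl n F B d_true i = 0"
  shows "winner n F B d i"
proof -
  note zero = before_i_null_if_Fstar_excl_zero[OF assms(2,3)]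
  have before_i_d: "chi n F d (pos_true - 1) = before_i"
    using chi_eq_before_pos_true[of "pos_true - 1"] pos_true_in by simp
  have "greedy_next n F d before_i = greedy_next n F d_true before_i"
  proof (rule greedy_next_eq_if_ratio_le)
    show "{1..n} - before_i \<noteq> {}"
      using before_i_step(2) i_in by blast
    show "\<forall>t\<in>{1..n} - before_i. ratio F d before_i t \<le> ratio F d_true before_i t"
      using zero c_nonneg overreport by (intro ballI ratio_le_ratio_fun_upd) auto
    have "greedy_next n F d_true before_i = i"
      using gx_greedy_pos[OF i_in, of F d_true] by (simp add: gx_def)
    then show "ratio F d before_i (greedy_next n F d_true before_i) =
               ratio F d_true before_i (greedy_next n F d_true before_i)"
      using zero assms(1) overreport by (simp add: ratio_def)
  qed
  then have "gx n F d pos_true = i"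
    using gx_greedy_pos[OF i_in, of F d_true] before_i_d by (simp add: gx_def)
  then have "greedy_pos n F d i = pos_true" "chi n F d pos_true = insert i before_i"
    using greedy_pos_gx[OF pos_true_in, of F d] gx_step(2)[OF pos_true_in, of F d] before_i_d
    by auto
  moreover have "pos_true \<le> kcut n F B d"
    using zero calculation(2) Fstar_nonneg[of B d] B_pos pos_true_in by (intro le_kcutI) auto
  ultimately show ?thesis
    using winner_iff[OF i_in] by simp
qed

lemma cost_le_payment_true:
  assumes "winner n F B d_true i" "\<not> winner n F B d i"
  shows "c \<le> payment n F B d_true i"
proof (cases "c = 0")
  case False
  let ?Fex = "Fstar_excl n F B d_true i"
  have "?Fex \<noteq> 0"
    using winner_if_Fstar_excl_zero assms c_nonneg False by force
  then have "0 < ?Fex"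
    using Fstar_excl_nonneg[of B d_true i] B_pos by simp
  moreover have "c * ?Fex \<le> 2 * B * marg n F d_true pos_true"
    using winner_cost_bound[of B d_true i] B_pos d_true_nonneg assms(1) by simp
  ultimately show ?thesis
    using assms(1) by (simp add: payment_winner pos_le_divide_eq field_simps)
qed (use payment_nonneg B_pos in simp)

theorem utility_true_ge: "utility n F B d i c \<le> utility n F B d_true i c"
proof (cases "winner n F B d i")
  case True
  then show ?thesis
    using winner_true_if_winner by (simp add: utility_def)
next
  case False
  then show ?thesis
    using cost_le_payment_true payment_nonneg[of B d_true i] B_pos
    by (auto simp: utility_def payment_def)
qed

end

theorem lemma16:
  fixes n :: nat and F :: "nat set \<Rightarrow> real" and B :: real
    and d :: "nat \<Rightarrow> real" and i :: nat and c :: real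
  assumes B_pos: "B > 0"
    and F_nonneg: "\<forall>A. A \<subseteq> {1..n} \<longrightarrow> F A \<ge> 0"
    and F_mono: "\<forall>A A'. A \<subseteq> A' \<and> A' \<subseteq> {1..n} \<longrightarrow> F A \<le> F A'"
    and F_submod: "\<forall>A A'. A \<subseteq> {1..n} \<and> A' \<subseteq> {1..n} \<longrightarrow>
                      F (A \<union> A') + F (A \<inter> A') \<le> F A + F A'"
    and d_nonneg: "\<forall>j\<in>{1..n}. d j \<ge> 0"
    and i_in: "i \<in> {1..n}"
    and c_nonneg: "c \<ge> 0"
    and over: "d i > c"
  shows "utility n F B (d(i := c)) i c \<ge> utility n F B d i c"
proof -
  interpret misreport n F B d i c
    by unfold_locales (use assms in auto)
  show ?thesis
    by (rule utility_true_ge)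
qed

end
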